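(* Let $W$ be a finite set of possible worlds and let $\bullet$ be an operator assigning to every pair $(G_1,G_2)$ of belief algebras on $W$ a belief algebra $G_1\bullet G_2$ on $W$, and suppose $\bullet$ satisfies the postulates (RA1)–(RA6) described in the context. Then for any belief algebras $G_1,G_2$ on $W$, the revision result $G_1\bullet G_2$ is unique, and $$G_1\bullet G_2=\operatorname{Gen}\big((G_1\cup G_2)\cap (\operatorname{Com}(G_1)\bullet \operatorname{Com}(G_2))\big).$$
   Context: $W$ is a finite nonempty set (the possible worlds of a finite propositional language). Let $R_W=\{(U,V)\mid U,V\subseteq W,\ U\cap V=\varnothing\}$. A belief algebra on $W$ is a pair $(2^W,\gg)$, where $\gg$ is a binary relation on $2^W$ satisfying, for all $U,V,U_1,V_1,U_2,V_2\subseteq W$: (A0) $\gg\subseteq R_W$; (A1) $U\gg\varnothing$ iff $U\neq\varnothing$; (A2) if $U\gg V$ then not $V\gg U$; (A3) if $U_1\supseteq U$, $U\gg V$, $V\supseteq V_1$ and $U_1\cap V_1=\varnothing$, then $U_1\gg V_1$; (A4) if $U=U_1\cup V_1=U_2\cup V_2$, $U_1\gg V_1$ and $U_2\gg V_2$, then $U_1\cap U_2\gg V_1\cup V_2$. A belief algebra is identified with its relation $\gg$, viewed as a set of pairs; $(U,V)\in G$ means $U\gg V$, and $\subseteq,\cup,\cap$ between belief algebras refer to these sets of pairs. For $\Omega\subseteq R_W$, $\operatorname{Gen}(\Omega)$ is the smallest subset of $R_W$ containing $\Omega$ and closed under: (i) it contains $(U,\varnothing)$ for every nonempty $U\subseteq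 W$; (ii) if $(U,V)$ is in it, $U\subseteq U_1$, $V_1\subseteq V$, $U_1\cap V_1=\varnothing$, then $(U_1,V_1)$ is in it; (iii) if $U_1\cup V_1=U_2\cup V_2$ and $(U_1,V_1),(U_2,V_2)$ are in it, then $(U_1\cap U_2,V_1\cup V_2)$ is in it; when $\operatorname{Gen}(\Omega)$ satisfies (A2) it is regarded as a belief algebra. Total preorders: for a total preorder $\preceq$ on $W$, write $\omega\prec\omega'$ iff $\omega\preceq\omega'$ and not $\omega'\preceq\omega$. The relation defined by $U\gg V$ iff $U\cap V=\varnothing$ and there is $\omega_1\in U$ with $\omega_1\prec\omega_2$ for all $\omega_2\in V$ is a belief algebra; belief algebras arising this way are called complete belief algebras (CBAs). Backbone: every belief algebra $(2^W,\gg)$ has a unique backbone, a sequence $U_1,\dots,U_n$ of nonempty pairwise disjoint sets with union $W$, such that $U_i\gg U_{i+1}$ for all $i<n$ and, for each $i$, any two disjoint nonempty subsets $V_1,V_2$ of $U_i$ are incomparable under $\gg$. For nonempty $V\subseteq W$, the support $I(V)$ of $V$ (w.r.t. this backbone) is $U_i$ for the least index $i$ with $V\cap U_i\neq\varnothing$. $\operatorname{Com}(G)$ denotes the unique CBA that contains $G$ and has the same backbone as $G$ (explicitly, the CBA of the total preorder with $\omega\preceq\omega'$ iff the backbone block containing $\omega$ has index $\le$ that of the block containing $\omega'$). Write $G_1\leq G_2$ iff $G_1,G_2$ have the same backbone and $G_1\subseteq G_2$. Postulates for $\bullet$ (for all belief algebras $G_1=(2^W,\gg_1)$, $G_2=(2^W,\gg_2)$,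 $G_1',G_2'$): (RA1) $G_2\subseteq G_1\bullet G_2$. (RA2) There is $\Omega\subseteq G_1\cup G_2$ with $G_1\bullet G_2=\operatorname{Gen}(\Omega)$. (RA3) If $G_1,G_2$ are CBAs then $G_1\bullet G_2$ is a CBA. (RA4) If $G_1,G_2$ are CBAs and $\omega,\omega'\in W$ satisfy $I_2(\{\omega\})=I_2(\{\omega'\})$, where $I_2$ is the support w.r.t. the backbone of $G_2$, then $(\{\omega\},\{\omega'\})\in G_1\bullet G_2$ iff $\{\omega\}\gg_1\{\omega'\}$. (RA5) If $G_1\leq G_1'$ and $G_2\leq G_2'$ then $G_1\bullet G_2\subseteq G_1'\bullet G_2'$. (RA6) If $\Omega\subseteq G_1\cup G_2$, $\operatorname{Gen}(\Omega)\subseteq \operatorname{Com}(G_1)\bullet\operatorname{Com}(G_2)$ and $G_1\bullet G_2\subseteq\operatorname{Gen}(\Omega)$, then $G_1\bullet G_2=\operatorname{Gen}(\Omega)$. *)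

theory Defs
  imports Main
begin

text \<open>Worlds: a finite (nonempty) type 'a, so W = UNIV. A belief algebra is a set of
pairs of sets of worlds.\<close>

type_synonym 'a brel = "('a set \<times> 'a set) set"

definition belief_algebra :: "'a brel \<Rightarrow> bool" where
  "belief_algebra G \<longleftrightarrow>
     (\<forall>U V. (U, V) \<in> G \<longrightarrow> U \<inter> V = {}) \<and>
     (\<forall>U. (U, {}) \<in> G \<longleftrightarrow> U \<noteq> {}) \<and>
     (\<forall>U V. (U, V) \<in> G \<longrightarrow> (V, U) \<notin> G) \<and>
     (\<forall>U V U1 V1. U \<subseteq> U1 \<longrightarrow> (U, V) \<in> G \<longrightarrow> V1 \<subseteq> V \<longrightarrow> U1 \<inter> V1 = {}
        \<longrightarrow> (U1, V1) \<in> G) \<and>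
     (\<forall>U U1 V1 U2 V2. U = U1 \<union> V1 \<longrightarrow> U = U2 \<union> V2 \<longrightarrow> (U1, V1) \<in> G \<longrightarrow>
        (U2, V2) \<in> G \<longrightarrow> (U1 \<inter> U2, V1 \<union> V2) \<in> G)"

inductive_set Gen :: "'a brel \<Rightarrow> 'a brel" for \<Omega> :: "'a brel" where
  base: "x \<in> \<Omega> \<Longrightarrow> x \<in> Gen \<Omega>"
| empty: "U \<noteq> {} \<Longrightarrow> (U, {}) \<in> Gen \<Omega>"
| mono: "(U, V) \<in> Gen \<Omega> \<Longrightarrow> U \<subseteq> U1 \<Longrightarrow> V1 \<subseteq> V \<Longrightarrow> U1 \<inter> V1 = {}
           \<Longrightarrow> (U1, V1) \<in> Gen \<Omega>"
| meet: "U1 \<union> V1 = U2 \<union> V2 \<Longrightarrow> (U1, V1) \<in> Gen \<Omega> \<Longrightarrow> (U2, V2) \<in> Gen \<Omega>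
           \<Longrightarrow> (U1 \<inter> U2, V1 \<union> V2) \<in> Gen \<Omega>"

definition cba_of :: "('a \<Rightarrow> 'a \<Rightarrow> bool) \<Rightarrow> 'a brel" where
  "cba_of le = {(U, V). U \<inter> V = {} \<and> (\<exists>w1\<in>U. \<forall>w2\<in>V. le w1 w2 \<and> \<not> le w2 w1)}"

definition total_preorder :: "('a \<Rightarrow> 'a \<Rightarrow> bool) \<Rightarrow> bool" where
  "total_preorder le \<longleftrightarrow> (\<forall>x y. le x y \<or> le y x) \<and> (\<forall>x y z. le x y \<longrightarrow> le y z \<longrightarrow> le x z)"

definition is_CBA :: "'a brel \<Rightarrow> bool" where
  "is_CBA G \<longleftrightarrow> (\<exists>le. total_preorder le \<and> G = cba_of le)"

definition is_backbone :: "'a brel \<Rightarrow> 'a set list \<Rightarrow> bool" where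
  "is_backbone G Us \<longleftrightarrow>
     (\<forall>U\<in>set Us. U \<noteq> {}) \<and>
     (\<forall>i j. i < length Us \<longrightarrow> j < length Us \<longrightarrow> i \<noteq> j \<longrightarrow> Us ! i \<inter> Us ! j = {}) \<and>
     \<Union>(set Us) = UNIV \<and>
     (\<forall>i. Suc i < length Us \<longrightarrow> (Us ! i, Us ! Suc i) \<in> G) \<and>
     (\<forall>i < length Us. \<forall>V1 V2. V1 \<subseteq> Us ! i \<longrightarrow> V2 \<subseteq> Us ! i \<longrightarrow> V1 \<inter> V2 = {} \<longrightarrow>
        V1 \<noteq> {} \<longrightarrow> V2 \<noteq> {} \<longrightarrow> (V1, V2) \<notin> G)"

definition backbone :: "'a brel \<Rightarrow> 'a set list" where
  "backbone G = (THE Us. is_backbone G Us)"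

definition support :: "'a brel \<Rightarrow> 'a set \<Rightarrow> 'a set" where
  "support G V = backbone G ! (LEAST i. V \<inter> backbone G ! i \<noteq> {})"

definition blk :: "'a brel \<Rightarrow> 'a \<Rightarrow> nat" where
  "blk G w = (LEAST i. w \<in> backbone G ! i)"

definition Com :: "'a brel \<Rightarrow> 'a brel" where
  "Com G = cba_of (\<lambda>x y. blk G x \<le> blk G y)"

definition ba_le :: "'a brel \<Rightarrow> 'a brel \<Rightarrow> bool" where
  "ba_le G1 G2 \<longleftrightarrow> backbone G1 = backbone G2 \<and> G1 \<subseteq> G2"

end

theory Submission
  imports Defs
begin

(* By RA2, G1 \<bullet> G2 = Gen \<Omega> for some \<Omega> \<subseteq> G1 \<union> G2, and since G \<le> Com G (same backbone,
   G \<subseteq> Com G), RA5 places G1 \<bullet> G2 inside R = Com G1 \<bullet> Com G2.  Hence \<Omega> \<subseteq> (G1 \<union> G2) \<inter> R and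
   G1 \<bullet> G2 \<subseteq> Gen ((G1 \<union> G2) \<inter> R) \<subseteq> R, the last step because the belief algebra R is closed
   under the generating rules; RA6 turns this sandwich into an equality.

   The substance is G \<le> Com G.  The backbone of a set S of worlds is built by repeatedly
   peeling off its top block, the least X \<subseteq> S with X \<ggreater> S - X: it exists because such sets are
   closed under intersection (A4).  If U \<ggreater> V, then U reaches a strictly earlier block than all
   of V: otherwise U lies in the suffix starting at the first block k met by V, and then V
   cannot meet the top block k of that suffix. *)

lemma
  assumes "belief_algebra G"
  shows belief_algebra_disjoint: "(U, V) \<in> G \<Longrightarrow> U \<inter> V = {}"
    and belief_algebra_empty_right: "(U, {}) \<in> G \<longleftrightarrow> U \<noteq> {}"
    and belief_algebra_mono:
      "(U, V) \<in> G \<Longrightarrow> U \<subseteq> U' \<Longrightarrow> V' \<subseteq> V \<Longrightarrow> U' \<inter> V' = {} \<Longrightarrow> (U', V') \<in> G"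
    and belief_algebra_meet:
      "U1 \<union> V1 = U2 \<union> V2 \<Longrightarrow> (U1, V1) \<in> G \<Longrightarrow> (U2, V2) \<in> G \<Longrightarrow> (U1 \<inter> U2, V1 \<union> V2) \<in> G"
proof -
  note A = assms[unfolded belief_algebra_def]
  show "(U, V) \<in> G \<Longrightarrow> U \<inter> V = {}"
    using A[THEN conjunct1] by blast
  show "(U, {}) \<in> G \<longleftrightarrow> U \<noteq> {}"
    using A[THEN conjunct2, THEN conjunct1] by blast
  show "(U, V) \<in> G \<Longrightarrow> U \<subseteq> U' \<Longrightarrow> V' \<subseteq> V \<Longrightarrow> U' \<inter> V' = {} \<Longrightarrow> (U', V') \<in> G"
    using A[THEN conjunct2, THEN conjunct2, THEN conjunct2, THEN conjunct1] by blast
  show "U1 \<union> V1 = U2 \<union> V2 \<Longrightarrow> (U1, V1) \<in> G \<Longrightarrow> (U2, V2) \<in> G \<Longrightarrow> (U1 \<inter> U2, V1 \<union> V2) \<in> G"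
    using A[THEN conjunct2, THEN conjunct2, THEN conjunct2, THEN conjunct2] by blast
qed

lemma belief_algebra_cba_of:
  assumes "total_preorder le"
  shows "belief_algebra (cba_of le)"
proof -
  have total: "le x y \<or> le y x" and trans: "le x y \<Longrightarrow> le y z \<Longrightarrow> le x z" for x y z
    using assms unfolding total_preorder_def by blast+
  have meet: "(U1 \<inter> U2, V1 \<union> V2) \<in> cba_of le"
    if cover: "U1 \<union> V1 = U2 \<union> V2" and "(U1, V1) \<in> cba_of le" "(U2, V2) \<in> cba_of le"
    for U1 V1 U2 V2
  proof -
    obtain w1 where w1: "w1 \<in> U1" "\<forall>v\<in>V1. le w1 v \<and> \<not> le v w1" and "U1 \<inter> V1 = {}"
      using \<open>(U1, V1) \<in> cba_of le\<close> unfolding cba_of_def by blast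
    obtain w2 where w2: "w2 \<in> U2" "\<forall>v\<in>V2. le w2 v \<and> \<not> le v w2" and "U2 \<inter> V2 = {}"
      using \<open>(U2, V2) \<in> cba_of le\<close> unfolding cba_of_def by blast
    txt \<open>The smaller of the two witnesses beats both V1 and V2, hence it lies in U1 and U2.\<close>
    have "\<exists>w\<in>U1 \<inter> U2. \<forall>v\<in>V1 \<union> V2. le w v \<and> \<not> le v w"
    proof (cases "le w1 w2")
      case True
      then have "\<forall>v\<in>V2. le w1 v \<and> \<not> le v w1" using w2(2) trans by blast
      then show ?thesis using w1 cover by blast
    next
      case False
      then have "\<forall>v\<in>V1. le w2 v \<and> \<not> le v w2" using w1(2) total trans by blast
      then show ?thesis using w2 cover by blast
    qed
    then show ?thesis
      using \<open>U1 \<inter> V1 = {}\<close> \<open>U2 \<inter> V2 = {}\<close> unfolding cba_of_def by blast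
  qed
  show ?thesis
    unfolding belief_algebra_def
  proof (intro conjI allI impI)
    show "\<And>U U1 V1 U2 V2. U = U1 \<union> V1 \<Longrightarrow> U = U2 \<union> V2 \<Longrightarrow> (U1, V1) \<in> cba_of le \<Longrightarrow>
        (U2, V2) \<in> cba_of le \<Longrightarrow> (U1 \<inter> U2, V1 \<union> V2) \<in> cba_of le"
      using meet by blast
  qed (unfold cba_of_def; blast)+
qed

lemma belief_algebra_Com: "belief_algebra (Com G)"
  unfolding Com_def by (rule belief_algebra_cba_of) (auto simp: total_preorder_def)

lemma Com_iff: "(U, V) \<in> Com G \<longleftrightarrow> U \<inter> V = {} \<and> (\<exists>w\<in>U. \<forall>v\<in>V. blk G w < blk G v)"
  unfolding Com_def cba_of_def by (simp add: less_le_not_le)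

lemma Gen_least:
  assumes "belief_algebra H" and "\<Omega> \<subseteq> H"
  shows "Gen \<Omega> \<subseteq> H"
proof
  fix x assume "x \<in> Gen \<Omega>"
  then show "x \<in> H"
  proof induction
    case (base x)
    then show ?case using assms(2) by blast
  next
    case (empty U)
    then show ?case using belief_algebra_empty_right[OF assms(1)] by simp
  next
    case (mono U V U1 V1)
    then show ?case using belief_algebra_mono[OF assms(1)] by blast
  next
    case (meet U1 V1 U2 V2)
    then show ?case using belief_algebra_meet[OF assms(1)] by blast
  qed
qed

lemma Gen_mono:
  assumes "\<Omega> \<subseteq> \<Omega>'"
  shows "Gen \<Omega> \<subseteq> Gen \<Omega>'"
proof
  fix x assume "x \<in> Gen \<Omega>"
  then show "x \<in> Gen \<Omega>'"
    by induction (use assms in \<open>auto intro: Gen.intros\<close>)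
qed

definition incomparable_within :: "'a brel \<Rightarrow> 'a set \<Rightarrow> bool" where
  "incomparable_within G X \<longleftrightarrow>
     (\<forall>V1 V2. V1 \<subseteq> X \<longrightarrow> V2 \<subseteq> X \<longrightarrow> V1 \<inter> V2 = {} \<longrightarrow> V1 \<noteq> {} \<longrightarrow> V2 \<noteq> {} \<longrightarrow> (V1, V2) \<notin> G)"

lemma incomparable_withinD:
  "incomparable_within G X \<Longrightarrow> V1 \<subseteq> X \<Longrightarrow> V2 \<subseteq> X \<Longrightarrow> V1 \<inter> V2 = {} \<Longrightarrow> V1 \<noteq> {} \<Longrightarrow> V2 \<noteq> {}
    \<Longrightarrow> (V1, V2) \<notin> G"
  unfolding incomparable_within_def by blast

definition is_backbone_on :: "'a brel \<Rightarrow> 'a set \<Rightarrow> 'a set list \<Rightarrow> bool" where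
  "is_backbone_on G S Us \<longleftrightarrow>
     (\<forall>U\<in>set Us. U \<noteq> {}) \<and>
     (\<forall>i j. i < length Us \<longrightarrow> j < length Us \<longrightarrow> i \<noteq> j \<longrightarrow> Us ! i \<inter> Us ! j = {}) \<and>
     \<Union>(set Us) = S \<and>
     (\<forall>i. Suc i < length Us \<longrightarrow> (Us ! i, Us ! Suc i) \<in> G) \<and>
     (\<forall>i < length Us. incomparable_within G (Us ! i))"

lemma is_backbone_iff_on_UNIV: "is_backbone G Us \<longleftrightarrow> is_backbone_on G UNIV Us"
  unfolding is_backbone_def is_backbone_on_def incomparable_within_def by simp

lemma is_backbone_on_Nil [simp]: "is_backbone_on G S [] \<longleftrightarrow> S = {}"
  unfolding is_backbone_on_def by auto

lemma is_backbone_on_Cons: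
  "is_backbone_on G S (X # Us) \<longleftrightarrow>
     X \<noteq> {} \<and> X \<subseteq> S \<and> incomparable_within G X \<and> (Us \<noteq> [] \<longrightarrow> (X, hd Us) \<in> G) \<and>
     is_backbone_on G (S - X) Us"
proof -
  have "X \<inter> \<Union>(set Us) = {} \<longleftrightarrow> (\<forall>j<length Us. X \<inter> Us ! j = {})"
    by (simp only: Int_Union SUP_bot_conv all_set_conv_all_nth)
  then have disjoint: "(\<forall>i j. i < length (X # Us) \<longrightarrow> j < length (X # Us) \<longrightarrow> i \<noteq> j \<longrightarrow>
       (X # Us) ! i \<inter> (X # Us) ! j = {}) \<longleftrightarrow>
     X \<inter> \<Union>(set Us) = {} \<and>
     (\<forall>i j. i < length Us \<longrightarrow> j < length Us \<longrightarrow> i \<noteq> j \<longrightarrow> Us ! i \<inter> Us ! j = {})"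
    by (simp add: All_less_Suc2 Int_commute) meson
  have chain: "(\<forall>i. Suc i < length (X # Us) \<longrightarrow> ((X # Us) ! i, (X # Us) ! Suc i) \<in> G) \<longleftrightarrow>
     (Us \<noteq> [] \<longrightarrow> (X, hd Us) \<in> G) \<and> (\<forall>i. Suc i < length Us \<longrightarrow> (Us ! i, Us ! Suc i) \<in> G)"
    by (cases Us) (simp_all add: All_less_Suc2)
  have union: "X \<inter> \<Union>(set Us) = {} \<and> X \<union> \<Union>(set Us) = S \<longleftrightarrow> X \<subseteq> S \<and> \<Union>(set Us) = S - X"
    by blast
  show ?thesis
    unfolding is_backbone_on_def disjoint chain by (simp add: All_less_Suc2) (use union in argo)
qed

lemma is_backbone_disjoint:
  "is_backbone G Us \<Longrightarrow> i < length Us \<Longrightarrow> j < length Us \<Longrightarrow> i \<noteq> j \<Longrightarrow> Us ! i \<inter> Us ! j = {}"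
  unfolding is_backbone_def by simp

lemma is_backbone_superset:
  assumes "is_backbone G Us" and "G \<subseteq> H" and "\<forall>U\<in>set Us. incomparable_within H U"
  shows "is_backbone H Us"
  using assms unfolding is_backbone_iff_on_UNIV is_backbone_on_def
  by (auto simp: all_set_conv_all_nth)

lemma mem_Union_set_drop: "k \<le> i \<Longrightarrow> i < length Us \<Longrightarrow> w \<in> Us ! i \<Longrightarrow> w \<in> \<Union>(set (drop k Us))"
  using nth_mem[of "i - k" "drop k Us"] by auto

definition is_top_block :: "'a brel \<Rightarrow> 'a set \<Rightarrow> 'a set \<Rightarrow> bool" where
  "is_top_block G S X \<longleftrightarrow> X \<subseteq> S \<and> (X, S - X) \<in> G \<and> (\<forall>Y\<subseteq>S. (Y, S - Y) \<in> G \<longrightarrow> X \<subseteq> Y)"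

lemma top_block_unique: "is_top_block G S X \<Longrightarrow> is_top_block G S Y \<Longrightarrow> X = Y"
  unfolding is_top_block_def by blast

context
  fixes G :: "'a brel"
  assumes ba: "belief_algebra G"
begin

lemma belief_algebra_empty_left: "({}, V) \<notin> G"
proof
  assume "({}, V) \<in> G"
  then have "({}, {}) \<in> G" by (rule belief_algebra_mono[OF ba]) simp_all
  then show False using belief_algebra_empty_right[OF ba] by simp
qed

lemma belief_algebra_trans_union:
  assumes AB: "(A, B) \<in> G" and BC: "(B, C) \<in> G" and "A \<inter> C = {}"
  shows "(A, B \<union> C) \<in> G"
proof -
  have "A \<inter> B = {}" "B \<inter> C = {}"
    using belief_algebra_disjoint[OF ba] AB BC by auto
  then have "(A \<union> C, B) \<in> G" "(A \<union> B, C) \<in> G"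
    using belief_algebra_mono[OF ba AB, of "A \<union> C" B] belief_algebra_mono[OF ba BC, of "A \<union> B" C]
      \<open>A \<inter> C = {}\<close> by blast+
  from belief_algebra_meet[OF ba _ this] have "((A \<union> C) \<inter> (A \<union> B), B \<union> C) \<in> G"
    by (simp add: Un_ac)
  moreover have "(A \<union> C) \<inter> (A \<union> B) = A"
    using \<open>A \<inter> B = {}\<close> \<open>B \<inter> C = {}\<close> by blast
  ultimately show ?thesis by simp
qed

lemma belief_algebra_split_Int:
  assumes "(X, S - X) \<in> G" "(Y, S - Y) \<in> G" "X \<subseteq> S" "Y \<subseteq> S"
  shows "(X \<inter> Y, S - X \<inter> Y) \<in> G"
proof -
  have "X \<union> (S - X) = Y \<union> (S - Y)" using assms(3,4) by blast
  from belief_algebra_meet[OF ba this assms(1,2)] show ?thesis by (simp add: Diff_Int)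
qed

lemma top_block_exists:
  assumes "finite S" "S \<noteq> {}"
  shows "\<exists>X. is_top_block G S X"
proof -
  define P where "P X \<longleftrightarrow> X \<subseteq> S \<and> (X, S - X) \<in> G" for X
  have "P S" using assms(2) belief_algebra_empty_right[OF ba] by (simp add: P_def)
  then obtain X where "P X" and min: "\<And>Y. P Y \<Longrightarrow> card X \<le> card Y"
    using ex_has_least_nat[of P S card] by blast
  have "X \<subseteq> Y" if "P Y" for Y
  proof -
    have "P (X \<inter> Y)" using belief_algebra_split_Int \<open>P X\<close> \<open>P Y\<close> by (auto simp: P_def)
    then have "card X \<le> card (X \<inter> Y)" by (rule min)
    moreover have "finite X" using \<open>P X\<close> assms(1) finite_subset by (auto simp: P_def)
    ultimately show ?thesis using card_seteq[of X "X \<inter> Y"] by blast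
  qed
  then show ?thesis using \<open>P X\<close> unfolding P_def is_top_block_def by blast
qed

lemma top_block_nonempty: "is_top_block G S X \<Longrightarrow> S \<noteq> {} \<Longrightarrow> X \<noteq> {}"
  using belief_algebra_empty_left unfolding is_top_block_def by force

lemma top_block_disjoint_beaten:
  assumes top: "is_top_block G S X" and "U \<subseteq> S" and UV: "(U, V) \<in> G"
  shows "X \<inter> V = {}"
proof -
  have "(S - X \<inter> V, X \<inter> V) \<in> G"
    using belief_algebra_mono[OF ba UV, of "S - X \<inter> V" "X \<inter> V"] belief_algebra_disjoint[OF ba UV]
      \<open>U \<subseteq> S\<close> by blast
  moreover have "S - (S - X \<inter> V) = X \<inter> V"
    using top by (auto simp: is_top_block_def)
  ultimately have "X \<subseteq> S - X \<inter> V"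
    using top unfolding is_top_block_def by (metis Diff_subset)
  then show ?thesis by blast
qed

lemma top_block_incomparable:
  assumes top: "is_top_block G S X"
  shows "incomparable_within G X"
  unfolding incomparable_within_def
proof (intro allI impI notI)
  fix V1 V2 assume "V1 \<subseteq> X" "V2 \<subseteq> X" "V1 \<inter> V2 = {}" "V1 \<noteq> {}" "V2 \<noteq> {}" "(V1, V2) \<in> G"
  moreover have "V1 \<subseteq> S" using top \<open>V1 \<subseteq> X\<close> by (auto simp: is_top_block_def)
  ultimately have "X \<inter> V2 = {}"
    using top_block_disjoint_beaten[OF top] by blast
  then show False using \<open>V2 \<subseteq> X\<close> \<open>V2 \<noteq> {}\<close> by blast
qed

lemma top_blockI:
  assumes XS: "X \<subseteq> S" and split: "(X, S - X) \<in> G" and incomparable: "incomparable_within G X"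
  shows "is_top_block G S X"
  unfolding is_top_block_def
proof (intro conjI allI impI XS split)
  fix Y assume "Y \<subseteq> S" "(Y, S - Y) \<in> G"
  with split XS have "(X \<inter> Y, S - X \<inter> Y) \<in> G"
    by (intro belief_algebra_split_Int)
  then have "(X \<inter> Y, X - Y) \<in> G"
    by (rule belief_algebra_mono[OF ba]) (use XS in auto)
  moreover from this have "X \<inter> Y \<noteq> {}"
    using belief_algebra_empty_left by metis
  ultimately show "X \<subseteq> Y"
    using incomparable_withinD[OF incomparable, of "X \<inter> Y" "X - Y"] by blast
qed

lemma backbone_on_Cons_top_block: "is_backbone_on G S (X # Us) \<Longrightarrow> is_top_block G S X"
proof (induction Us arbitrary: S X)
  case Nil
  then have "X \<subseteq> S" "S - X = {}" "X \<noteq> {}" "incomparable_within G X"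
    by (simp_all add: is_backbone_on_Cons)
  then show ?case
    using belief_algebra_empty_right[OF ba] by (simp add: top_blockI)
next
  case (Cons Y Us)
  then have XY: "(X, Y) \<in> G" and bb: "is_backbone_on G (S - X) (Y # Us)"
    and "X \<subseteq> S" "incomparable_within G X"
    by (simp_all add: is_backbone_on_Cons)
  have "(Y, S - X - Y) \<in> G"
    using Cons.IH[OF bb] by (simp add: is_top_block_def)
  moreover have "X \<inter> (S - X - Y) = {}" by blast
  ultimately have "(X, Y \<union> (S - X - Y)) \<in> G" by (rule belief_algebra_trans_union[OF XY])
  moreover have "Y \<subseteq> S - X"
    using bb by (simp add: is_backbone_on_Cons)
  then have "Y \<union> (S - X - Y) = S - X" by blast
  ultimately have "(X, S - X) \<in> G" by simp
  then show ?case by (rule top_blockI[OF \<open>X \<subseteq> S\<close> _ \<open>incomparable_within G X\<close>])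
qed

lemma is_backbone_on_Cons_iff_top_block:
  "is_backbone_on G S (X # Us) \<longleftrightarrow>
     X \<noteq> {} \<and> is_top_block G S X \<and> is_backbone_on G (S - X) Us"
proof
  assume "is_backbone_on G S (X # Us)"
  then show "X \<noteq> {} \<and> is_top_block G S X \<and> is_backbone_on G (S - X) Us"
    using backbone_on_Cons_top_block by (simp add: is_backbone_on_Cons)
next
  assume "X \<noteq> {} \<and> is_top_block G S X \<and> is_backbone_on G (S - X) Us"
  then have "X \<noteq> {}" "is_top_block G S X" "is_backbone_on G (S - X) Us" by simp_all
  moreover have "Us \<noteq> [] \<Longrightarrow> (X, hd Us) \<in> G"
  proof -
    assume "Us \<noteq> []"
    then have "hd Us \<subseteq> S - X"
      using \<open>is_backbone_on G (S - X) Us\<close> by (cases Us) (simp_all add: is_backbone_on_Cons)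
    then show "(X, hd Us) \<in> G"
      using \<open>is_top_block G S X\<close> belief_algebra_mono[OF ba, of X "S - X" X "hd Us"]
      by (auto simp: is_top_block_def)
  qed
  ultimately show "is_backbone_on G S (X # Us)"
    using top_block_incomparable by (auto simp: is_backbone_on_Cons is_top_block_def)
qed

lemma backbone_on_unique: "is_backbone_on G S Us \<Longrightarrow> is_backbone_on G S Vs \<Longrightarrow> Us = Vs"
proof (induction Us arbitrary: S Vs)
  case Nil
  then show ?case by (cases Vs) (auto simp: is_backbone_on_Cons)
next
  case (Cons X Us)
  then obtain Y Vs' where Vs: "Vs = Y # Vs'"
    by (cases Vs) (auto simp: is_backbone_on_Cons)
  with Cons.prems have "is_top_block G S X" "is_top_block G S Y"
    by (simp_all add: is_backbone_on_Cons_iff_top_block)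
  then have "X = Y" by (rule top_block_unique)
  moreover have "Us = Vs'"
    using Cons.prems \<open>X = Y\<close> by (intro Cons.IH) (simp_all add: Vs is_backbone_on_Cons_iff_top_block)
  ultimately show ?case by (simp add: Vs)
qed

lemma backbone_on_exists: "finite S \<Longrightarrow> \<exists>Us. is_backbone_on G S Us"
proof (induction S rule: finite_psubset_induct)
  case (psubset S)
  show ?case
  proof (cases "S = {}")
    case True
    then have "is_backbone_on G S []" by simp
    then show ?thesis ..
  next
    case False
    then obtain X where X: "is_top_block G S X" using top_block_exists psubset.hyps by blast
    then have "X \<noteq> {}" using False by (rule top_block_nonempty)
    then have "S - X \<subset> S" using X by (auto simp: is_top_block_def)
    then obtain Us where "is_backbone_on G (S - X) Us" using psubset.IH by blast
    then have "is_backbone_on G S (X # Us)"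
      using X \<open>X \<noteq> {}\<close> by (simp add: is_backbone_on_Cons_iff_top_block)
    then show ?thesis ..
  qed
qed

lemma backbone_on_nth_top_block:
  "is_backbone_on G S Us \<Longrightarrow> k < length Us \<Longrightarrow> is_top_block G (\<Union>(set (drop k Us))) (Us ! k)"
proof (induction Us arbitrary: S k)
  case Nil
  then show ?case by simp
next
  case (Cons X Us)
  then have "is_top_block G S X" "is_backbone_on G (S - X) Us"
    by (simp_all add: is_backbone_on_Cons_iff_top_block)
  moreover have "\<Union>(set (X # Us)) = S"
    using Cons.prems(1) by (simp add: is_backbone_on_def)
  ultimately show ?case
    using Cons.IH Cons.prems(2) by (cases k) simp_all
qed

end

lemma backbone_eqI:
  fixes G :: "('a::finite) brel"
  assumes ba: "belief_algebra G" and "is_backbone G Us"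
  shows "backbone G = Us"
  unfolding backbone_def
proof (rule the_equality)
  show "is_backbone G Us" by (fact assms(2))
  fix Vs assume "is_backbone G Vs"
  with assms(2) show "Vs = Us"
    unfolding is_backbone_iff_on_UNIV by (rule backbone_on_unique[OF ba, rotated])
qed

context
  fixes G :: "('a::finite) brel"
  assumes ba: "belief_algebra G"
begin

lemma is_backbone_backbone: "is_backbone G (backbone G)"
proof -
  obtain Us where "is_backbone G Us"
    using backbone_on_exists[OF ba finite_UNIV] by (auto simp: is_backbone_iff_on_UNIV)
  moreover from this have "backbone G = Us" by (rule backbone_eqI[OF ba])
  ultimately show ?thesis by simp
qed

lemma blk_eqI:
  assumes "i < length (backbone G)" and "w \<in> backbone G ! i"
  shows "blk G w = i"
  unfolding blk_def
proof (rule Least_equality)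
  show "w \<in> backbone G ! i" by (fact assms(2))
  fix j assume "w \<in> backbone G ! j"
  show "i \<le> j"
  proof (rule ccontr)
    assume "\<not> i \<le> j"
    with assms(1) have "backbone G ! j \<inter> backbone G ! i = {}"
      by (intro is_backbone_disjoint[OF is_backbone_backbone]) simp_all
    with \<open>w \<in> backbone G ! j\<close> assms(2) show False by blast
  qed
qed

lemma blk_less_length: "blk G w < length (backbone G)"
  and mem_backbone_blk: "w \<in> backbone G ! blk G w"
proof -
  have "w \<in> \<Union>(set (backbone G))"
    using is_backbone_backbone by (simp add: is_backbone_def)
  then obtain i where "i < length (backbone G)" "w \<in> backbone G ! i"
    by (auto simp: in_set_conv_nth)
  with blk_eqI show "blk G w < length (backbone G)" "w \<in> backbone G ! blk G w"
    by simp_all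
qed

lemma subset_Com: "G \<subseteq> Com G"
proof
  fix p assume "p \<in> G"
  then obtain U V where p: "p = (U, V)" and UV: "(U, V) \<in> G" by (cases p) auto
  have "\<exists>w\<in>U. \<forall>v\<in>V. blk G w < blk G v"
  proof (cases "V = {}")
    case True
    then have "U \<noteq> {}" using UV belief_algebra_empty_right[OF ba] by simp
    with True show ?thesis by blast
  next
    case False
    define Us where "Us = backbone G"
    define k where "k = Min (blk G ` V)"
    have "k \<in> blk G ` V"
      unfolding k_def using False by (intro Min_in) simp_all
    then obtain v where "v \<in> V" "blk G v = k" by blast
    show ?thesis
    proof (rule ccontr)
      assume no_witness: "\<not> ?thesis"
      have k_le: "k \<le> blk G u" if "u \<in> U" for u
      proof -
        obtain v' where "v' \<in> V" "blk G v' \<le> blk G u"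
          using no_witness \<open>u \<in> U\<close> by (auto simp: not_less)
        then show ?thesis
          unfolding k_def by (meson Min_le finite_imageI finite image_eqI order_trans)
      qed
      have U_sub: "U \<subseteq> \<Union>(set (drop k Us))"
      proof
        fix u assume "u \<in> U"
        show "u \<in> \<Union>(set (drop k Us))"
          using mem_Union_set_drop[OF k_le[OF \<open>u \<in> U\<close>] blk_less_length mem_backbone_blk]
          by (simp add: Us_def)
      qed
      have top: "is_top_block G (\<Union>(set (drop k Us))) (Us ! k)"
        using is_backbone_backbone blk_less_length[of v] \<open>blk G v = k\<close>
        by (intro backbone_on_nth_top_block[OF ba]) (simp_all add: Us_def is_backbone_iff_on_UNIV)
      have "Us ! k \<inter> V = {}"
        by (rule top_block_disjoint_beaten[OF ba top U_sub UV])
      then show False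
        using mem_backbone_blk[of v] \<open>v \<in> V\<close> \<open>blk G v = k\<close> by (auto simp: Us_def)
    qed
  qed
  then show "p \<in> Com G"
    using p belief_algebra_disjoint[OF ba UV] by (simp add: Com_iff)
qed

lemma backbone_Com: "backbone (Com G) = backbone G"
proof -
  have "incomparable_within (Com G) U" if U_mem: "U \<in> set (backbone G)" for U
  proof -
    obtain i where i: "i < length (backbone G)" "backbone G ! i = U"
      using U_mem unfolding in_set_conv_nth by blast
    have blk_U: "blk G w = i" if "w \<in> U" for w
      using blk_eqI[OF i(1)] that i(2) by blast
    show ?thesis
      unfolding incomparable_within_def
    proof (intro allI impI notI)
      fix V1 V2
      assume "V1 \<subseteq> U" "V2 \<subseteq> U" "V1 \<inter> V2 = {}" "V1 \<noteq> {}" "V2 \<noteq> {}" "(V1, V2) \<in> Com G"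
      then obtain w v where "w \<in> V1" "v \<in> V2" "blk G w < blk G v"
        unfolding Com_iff by blast
      with \<open>V1 \<subseteq> U\<close> \<open>V2 \<subseteq> U\<close> show False
        using blk_U by (metis less_irrefl subsetD)
    qed
  qed
  then have "is_backbone (Com G) (backbone G)"
    by (intro is_backbone_superset[OF is_backbone_backbone subset_Com]) blast
  then show ?thesis
    by (rule backbone_eqI[OF belief_algebra_Com])
qed

lemma ba_le_Com: "ba_le G (Com G)"
  unfolding ba_le_def using backbone_Com subset_Com by simp

end

theorem theorem5:
  fixes rev :: "('a::finite) brel \<Rightarrow> 'a brel \<Rightarrow> 'a brel"
  assumes closed: "\<And>G1 G2. belief_algebra G1 \<Longrightarrow> belief_algebra G2 \<Longrightarrow> belief_algebra (rev G1 G2)"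
    and RA1: "\<And>G1 G2. belief_algebra G1 \<Longrightarrow> belief_algebra G2 \<Longrightarrow> G2 \<subseteq> rev G1 G2"
    and RA2: "\<And>G1 G2. belief_algebra G1 \<Longrightarrow> belief_algebra G2 \<Longrightarrow>
               \<exists>\<Omega>. \<Omega> \<subseteq> G1 \<union> G2 \<and> rev G1 G2 = Gen \<Omega>"
    and RA3: "\<And>G1 G2. belief_algebra G1 \<Longrightarrow> belief_algebra G2 \<Longrightarrow> is_CBA G1 \<Longrightarrow> is_CBA G2 \<Longrightarrow>
               is_CBA (rev G1 G2)"
    and RA4: "\<And>G1 G2 w w'. belief_algebra G1 \<Longrightarrow> belief_algebra G2 \<Longrightarrow> is_CBA G1 \<Longrightarrow> is_CBA G2 \<Longrightarrow>
               support G2 {w} = support G2 {w'} \<Longrightarrow>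
               (({w}, {w'}) \<in> rev G1 G2 \<longleftrightarrow> ({w}, {w'}) \<in> G1)"
    and RA5: "\<And>G1 G2 G1' G2'. belief_algebra G1 \<Longrightarrow> belief_algebra G2 \<Longrightarrow>
               belief_algebra G1' \<Longrightarrow> belief_algebra G2' \<Longrightarrow>
               ba_le G1 G1' \<Longrightarrow> ba_le G2 G2' \<Longrightarrow> rev G1 G2 \<subseteq> rev G1' G2'"
    and RA6: "\<And>G1 G2 \<Omega>. belief_algebra G1 \<Longrightarrow> belief_algebra G2 \<Longrightarrow>
               \<Omega> \<subseteq> G1 \<union> G2 \<Longrightarrow> Gen \<Omega> \<subseteq> rev (Com G1) (Com G2) \<Longrightarrow>
               rev G1 G2 \<subseteq> Gen \<Omega> \<Longrightarrow> rev G1 G2 = Gen \<Omega>"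
    and G1: "belief_algebra G1" and G2: "belief_algebra G2"
  shows "rev G1 G2 = Gen ((G1 \<union> G2) \<inter> rev (Com G1) (Com G2))"
proof (rule RA6[OF G1 G2])
  let ?R = "rev (Com G1) (Com G2)"
  show "(G1 \<union> G2) \<inter> ?R \<subseteq> G1 \<union> G2" by blast
  show "Gen ((G1 \<union> G2) \<inter> ?R) \<subseteq> ?R"
    by (rule Gen_least) (simp_all add: closed belief_algebra_Com)
  obtain \<Omega> where \<Omega>: "\<Omega> \<subseteq> G1 \<union> G2" and rev_eq: "rev G1 G2 = Gen \<Omega>"
    using RA2[OF G1 G2] by blast
  have "rev G1 G2 \<subseteq> ?R"
    using RA5 G1 G2 belief_algebra_Com ba_le_Com by blast
  then have "\<Omega> \<subseteq> (G1 \<union> G2) \<inter> ?R"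
    using \<Omega> rev_eq Gen.base by blast
  then show "rev G1 G2 \<subseteq> Gen ((G1 \<union> G2) \<inter> ?R)"
    unfolding rev_eq by (rule Gen_mono)
qed

end
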